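(* Let $G=(V,E)$ be a finite simple connected graph with $n$ vertices, $\omega\colon V\to(0,\infty)$ a weight function with $\omega=\omega(V)$, $\delta>0$, and $s=\frac{8\ln n}{\delta^2}$. Let $S=\{m_1,\dots,m_s\}$ be a random multiset of $s$ vertices drawn independently with $\Pr(m_i=v)=\omega(v)/\omega$. Then for any vertex $v$, with probability at least $1-n^{-3}$, \[\frac{\Lambda(v)}{\omega}\le\frac{\Lambda^{*}(v)}{s}+\frac{\delta}{2}.\]
   Context: For vertices $q,v$, a vertex $u$ is consistent with $(q,v)$ if $q=v=u$, or $q\ne v$ and $v$ lies on a shortest path between $u$ and $q$; $N(q,v)$ is the set of such $u$. $N(v)$ is the neighbor set of $v$. $\omega(X)=\sum_{u\in X}\omega(u)$. $\Lambda(v)=\max_{u\in N(v)}\omega(N(v,u))$ and $\Lambda^{*}(v)=\max_{u\in N(v)}|S\cap N(v,u)|$, where $S\cap X$ is the multiset $\{m_i: m_i\in X\}$ (counted with multiplicity). *)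

theory Defs
  imports "HOL-Probability.Probability" "HOL-Library.Multiset"
begin

definition simple_graph :: "'a set \<Rightarrow> ('a \<Rightarrow> 'a \<Rightarrow> bool) \<Rightarrow> bool" where
  "simple_graph V E \<longleftrightarrow> finite V \<and> (\<forall>x y. E x y \<longrightarrow> x \<in> V \<and> y \<in> V)
     \<and> (\<forall>x y. E x y \<longrightarrow> E y x) \<and> (\<forall>x. \<not> E x x)"

definition is_walk :: "'a set \<Rightarrow> ('a \<Rightarrow> 'a \<Rightarrow> bool) \<Rightarrow> 'a list \<Rightarrow> bool" where
  "is_walk V E xs \<longleftrightarrow> xs \<noteq> [] \<and> set xs \<subseteq> V \<and> (\<forall>i. Suc i < length xs \<longrightarrow> E (xs ! i) (xs ! Suc i))"

definition connected_graph :: "'a set \<Rightarrow> ('a \<Rightarrow> 'a \<Rightarrow> bool) \<Rightarrow> bool" where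
  "connected_graph V E \<longleftrightarrow> (\<forall>u\<in>V. \<forall>v\<in>V. \<exists>xs. is_walk V E xs \<and> hd xs = u \<and> last xs = v)"

definition gdist :: "'a set \<Rightarrow> ('a \<Rightarrow> 'a \<Rightarrow> bool) \<Rightarrow> 'a \<Rightarrow> 'a \<Rightarrow> nat" where
  "gdist V E u v = (LEAST k. \<exists>xs. is_walk V E xs \<and> hd xs = u \<and> last xs = v \<and> length xs = Suc k)"

definition nbrs :: "'a set \<Rightarrow> ('a \<Rightarrow> 'a \<Rightarrow> bool) \<Rightarrow> 'a \<Rightarrow> 'a set" where
  "nbrs V E v = {u \<in> V. E v u}"

definition consistent_set :: "'a set \<Rightarrow> ('a \<Rightarrow> 'a \<Rightarrow> bool) \<Rightarrow> 'a \<Rightarrow> 'a \<Rightarrow> 'a set" where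
  "consistent_set V E q v = {u \<in> V. (q = v \<and> v = u) \<or>
      (q \<noteq> v \<and> gdist V E u q = gdist V E u v + gdist V E v q)}"

definition Lambda :: "'a set \<Rightarrow> ('a \<Rightarrow> 'a \<Rightarrow> bool) \<Rightarrow> ('a \<Rightarrow> real) \<Rightarrow> 'a \<Rightarrow> real" where
  "Lambda V E w v = Max ((\<lambda>u. sum w (consistent_set V E v u)) ` nbrs V E v)"

definition LambdaStar :: "'a set \<Rightarrow> ('a \<Rightarrow> 'a \<Rightarrow> bool) \<Rightarrow> 'a multiset \<Rightarrow> 'a \<Rightarrow> nat" where
  "LambdaStar V E S v = Max ((\<lambda>u. size (filter_mset (\<lambda>m. m \<in> consistent_set V E v u) S)) ` nbrs V E v)"

end

theory Submission
  imports Defs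
begin

text \<open>The maximum defining \<open>\<Lambda>(v)\<close> is attained at some neighbour \<open>u\<^sub>0\<close>, so
  \<open>\<Lambda>(v)/\<omega> = p\<close>, the probability that one sample falls into \<open>A = N(v,u\<^sub>0)\<close>, while \<open>\<Lambda>\<^sup>*(v)\<close> is at
  least the number of samples in \<open>A\<close>, which is binomially distributed with parameters
  \<open>s\<close> and \<open>p\<close>. Hoeffding's lower tail bound with deviation \<open>\<delta>/2\<close> bounds the failure probability
  by \<open>exp(-s\<delta>\<^sup>2/2) \<le> n\<^sup>-\<^sup>4 \<le> n\<^sup>-\<^sup>3\<close>. For \<open>n = 1\<close> the claimed bound is \<open>0\<close>.\<close>

lemma map_pmf_in_eq_bernoulli_pmf:
  "map_pmf (\<lambda>x. x \<in> A) D = bernoulli_pmf (measure_pmf.prob D A)"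
proof (rule pmf_eqI)
  fix b :: bool
  have p: "0 \<le> measure_pmf.prob D A" "measure_pmf.prob D A \<le> 1" by auto
  show "pmf (map_pmf (\<lambda>x. x \<in> A) D) b = pmf (bernoulli_pmf (measure_pmf.prob D A)) b"
  proof (cases b)
    case True
    then show ?thesis using p by (simp add: pmf_map vimage_def)
  next
    case False
    have "measure_pmf.prob D {x. x \<notin> A} = 1 - measure_pmf.prob D A"
      using measure_pmf.prob_compl[of A D] by (simp add: Compl_eq_Diff_UNIV[symmetric] Collect_neg_eq)
    then show ?thesis using p False by (simp add: pmf_map vimage_def)
  qed
qed

lemma map_pmf_count_replicate_pmf_eq_binomial_pmf:
  "map_pmf (\<lambda>xs. length (filter (\<lambda>x. x \<in> A) xs)) (replicate_pmf n D)
     = binomial_pmf n (measure_pmf.prob D A)"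
proof (induction n)
  case 0
  then show ?case by (simp add: binomial_pmf_0)
next
  case (Suc n)
  let ?count = "\<lambda>xs. length (filter (\<lambda>x. x \<in> A) xs)"
  have p: "measure_pmf.prob D A \<in> {0..1}" by auto
  have "map_pmf ?count (replicate_pmf (Suc n) D)
     = bind_pmf D (\<lambda>x. bind_pmf (map_pmf ?count (replicate_pmf n D))
          (\<lambda>k. return_pmf ((if x \<in> A then 1 else 0) + k)))"
    by (auto simp: map_pmf_def bind_assoc_pmf bind_return_pmf intro!: bind_pmf_cong)
  also have "\<dots> = bind_pmf (map_pmf (\<lambda>x. x \<in> A) D)
      (\<lambda>b. bind_pmf (binomial_pmf n (measure_pmf.prob D A)) (\<lambda>k. return_pmf ((if b then 1 else 0) + k)))"
    by (simp add: Suc bind_map_pmf)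
  also have "\<dots> = binomial_pmf (Suc n) (measure_pmf.prob D A)"
    by (simp add: map_pmf_in_eq_bernoulli_pmf binomial_pmf_Suc[OF p])
  finally show ?case .
qed

lemma prob_replicate_pmf_frequency_gt:
  fixes \<epsilon> :: real
  assumes "n > 0" and "\<epsilon> \<ge> 0"
  shows "measure_pmf.prob (replicate_pmf n D)
           {xs. measure_pmf.prob D A < real (length (filter (\<lambda>x. x \<in> A) xs)) / real n + \<epsilon>}
         \<ge> 1 - exp (-2 * real n * \<epsilon>\<^sup>2)"
proof -
  let ?M = "replicate_pmf n D" and ?p = "measure_pmf.prob D A"
  let ?low = "{xs. real (length (filter (\<lambda>x. x \<in> A) xs)) / real n \<le> ?p - \<epsilon>}"
  have binomial: "binomial_distribution ?p" unfolding binomial_distribution_def by auto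
  have "measure_pmf.prob (binomial_pmf n ?p) {k. real k / real n \<le> ?p - \<epsilon>} \<le> exp (-2 * real n * \<epsilon>\<^sup>2)"
    using binomial_distribution.prob_le'[OF binomial assms] by simp
  then have "measure_pmf.prob ?M ?low \<le> exp (-2 * real n * \<epsilon>\<^sup>2)"
    by (simp add: map_pmf_count_replicate_pmf_eq_binomial_pmf[symmetric] vimage_def)
  moreover have "measure_pmf.prob ?M (UNIV - ?low) = 1 - measure_pmf.prob ?M ?low"
    using measure_pmf.prob_compl[of ?low ?M] by simp
  moreover have "UNIV - ?low = {xs. ?p < real (length (filter (\<lambda>x. x \<in> A) xs)) / real n + \<epsilon>}"
    by auto
  ultimately show ?thesis by simp
qed

lemma measure_pmf_prob_eq_weight_ratio:
  assumes "finite V" and "A \<subseteq> V" and "\<forall>u\<in>V. pmf D u = w u / sum w V"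
  shows "measure_pmf.prob D A = sum w A / sum w V"
proof -
  have "finite A" using assms(1,2) by (rule finite_subset[rotated])
  then show ?thesis
    using measure_measure_pmf_finite[of A D] assms(2,3) by (simp add: sum_divide_distrib subset_iff)
qed

lemma exp_sample_size_le_inverse_cube:
  fixes n \<delta> s :: real
  assumes "n \<ge> 1" and "\<delta> > 0" and "s \<ge> 8 * ln n / \<delta>\<^sup>2"
  shows "exp (-2 * s * (\<delta> / 2)\<^sup>2) \<le> 1 / n ^ 3"
proof -
  have "s * \<delta>\<^sup>2 \<ge> 8 * ln n" using assms(2,3) by (simp add: field_simps)
  then have "exp (-2 * s * (\<delta> / 2)\<^sup>2) \<le> exp (- 4 * ln n)"
    by (simp add: power2_eq_square field_simps)
  also have "\<dots> = 1 / exp (ln (n ^ 4))"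
    by (simp add: ln_realpow exp_minus inverse_eq_divide)
  also have "\<dots> = 1 / n ^ 4"
    using assms(1) by simp
  also have "\<dots> \<le> 1 / n ^ 3"
    using assms(1) by (intro divide_left_mono power_increasing) auto
  finally show ?thesis .
qed

lemma simple_graph_finite: "simple_graph V E \<Longrightarrow> finite V"
  unfolding simple_graph_def by blast

lemma nbrs_nonempty:
  assumes "simple_graph V E" and "connected_graph V E" and "v \<in> V" and "card V \<ge> 2"
  shows "nbrs V E v \<noteq> {}"
proof -
  have "\<not> V \<subseteq> {v}" using assms(4) card_mono[of "{v}" V] by auto
  then obtain u where "u \<in> V" "u \<noteq> v" by blast
  then obtain xs where xs: "is_walk V E xs" "hd xs = v" "last xs = u"
    using assms(2,3) unfolding connected_graph_def by blast
  have "xs \<noteq> []" using xs(1) unfolding is_walk_def by blast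
  with xs(2,3) \<open>u \<noteq> v\<close> obtain y ys where "xs = v # y # ys"
    by (cases xs rule: remdups_adj.cases) auto
  then have "E v y" using xs(1) unfolding is_walk_def by force
  then have "y \<in> nbrs V E v" using assms(1) unfolding nbrs_def simple_graph_def by blast
  then show ?thesis by blast
qed

lemma Lambda_attained:
  assumes "finite V" and "nbrs V E v \<noteq> {}"
  obtains u where "u \<in> nbrs V E v" and "Lambda V E w v = sum w (consistent_set V E v u)"
proof -
  have "finite (nbrs V E v)" using assms(1) unfolding nbrs_def by simp
  then have "Lambda V E w v \<in> (\<lambda>u. sum w (consistent_set V E v u)) ` nbrs V E v"
    unfolding Lambda_def using assms(2) by (intro Max_in) auto
  then show ?thesis using that by blast
qed

lemma count_consistent_set_le_LambdaStar:
  assumes "finite V" and "u \<in> nbrs V E v"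
  shows "length (filter (\<lambda>x. x \<in> consistent_set V E v u) xs) \<le> LambdaStar V E (mset xs) v"
proof -
  have "finite (nbrs V E v)" using assms(1) unfolding nbrs_def by simp
  then have "size (filter_mset (\<lambda>x. x \<in> consistent_set V E v u) (mset xs)) \<le> LambdaStar V E (mset xs) v"
    unfolding LambdaStar_def using assms(2) by (intro Max_ge) auto
  then show ?thesis by (metis mset_filter size_mset)
qed

lemma Lambda_div_weight_attained:
  assumes "finite V" and "nbrs V E v \<noteq> {}" and "\<forall>u\<in>V. pmf D u = w u / sum w V"
  obtains u where "u \<in> nbrs V E v"
    and "Lambda V E w v / sum w V = measure_pmf.prob D (consistent_set V E v u)"
proof -
  obtain u where u: "u \<in> nbrs V E v" "Lambda V E w v = sum w (consistent_set V E v u)"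
    using Lambda_attained[OF assms(1,2)] .
  have "consistent_set V E v u \<subseteq> V" unfolding consistent_set_def by blast
  then have "measure_pmf.prob D (consistent_set V E v u) = sum w (consistent_set V E v u) / sum w V"
    using measure_pmf_prob_eq_weight_ratio[OF assms(1) _ assms(3)] by blast
  with u show ?thesis using that by simp
qed

theorem lemma12:
  fixes V :: "'a set" and E :: "'a \<Rightarrow> 'a \<Rightarrow> bool" and w :: "'a \<Rightarrow> real"
    and D :: "'a pmf" and \<delta> :: real and s :: nat and v :: 'a
  assumes "simple_graph V E" and "connected_graph V E"
    and "\<forall>u\<in>V. w u > 0"
    and "\<delta> > 0"
    and "s = nat \<lceil>8 * ln (real (card V)) / \<delta>^2\<rceil>"
    and "\<forall>u\<in>V. pmf D u = w u / sum w V"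
    and "v \<in> V"
  shows "measure_pmf.prob (replicate_pmf s D)
           {ms. Lambda V E w v / sum w V \<le> real (LambdaStar V E (mset ms) v) / real s + \<delta> / 2}
         \<ge> 1 - 1 / real (card V) ^ 3"
proof (cases "card V = 1")
  case False
  have finV: "finite V" using assms(1) by (rule simple_graph_finite)
  with assms(7) have "card V \<noteq> 0" by auto
  with False have n2: "card V \<ge> 2" by linarith
  obtain u0 where u0: "u0 \<in> nbrs V E v"
    and Lp: "Lambda V E w v / sum w V = measure_pmf.prob D (consistent_set V E v u0)"
    using Lambda_div_weight_attained[OF finV nbrs_nonempty[OF assms(1,2,7) n2] assms(6)] by blast
  define A where "A = consistent_set V E v u0"
  define freq where "freq xs = real (length (filter (\<lambda>x. x \<in> A) xs)) / real s" for xs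
  have s_ge: "real s \<ge> 8 * ln (real (card V)) / \<delta>\<^sup>2" using assms(5) by linarith
  moreover have "8 * ln (real (card V)) / \<delta>\<^sup>2 > 0" using n2 assms(4) by simp
  ultimately have "s > 0" by linarith
  have "1 - 1 / real (card V) ^ 3 \<le> 1 - exp (-2 * real s * (\<delta> / 2)\<^sup>2)"
    using exp_sample_size_le_inverse_cube[OF _ assms(4) s_ge] n2 by simp
  also have "\<dots> \<le> measure_pmf.prob (replicate_pmf s D) {xs. measure_pmf.prob D A < freq xs + \<delta> / 2}"
    using prob_replicate_pmf_frequency_gt[OF \<open>s > 0\<close>, of "\<delta> / 2"] assms(4) by (simp add: freq_def)
  also have "\<dots> \<le> measure_pmf.prob (replicate_pmf s D)
      {ms. Lambda V E w v / sum w V \<le> real (LambdaStar V E (mset ms) v) / real s + \<delta> / 2}"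
  proof (rule measure_pmf.finite_measure_mono)
    have "freq xs \<le> real (LambdaStar V E (mset xs) v) / real s" for xs
      using count_consistent_set_le_LambdaStar[OF finV u0] by (simp add: freq_def A_def divide_right_mono)
    then show "{xs. measure_pmf.prob D A < freq xs + \<delta> / 2} \<subseteq>
        {ms. Lambda V E w v / sum w V \<le> real (LambdaStar V E (mset ms) v) / real s + \<delta> / 2}"
      using Lp unfolding A_def by (smt (verit) mem_Collect_eq subsetI)
  qed simp
  finally show ?thesis .
next
  case True
  then show ?thesis by simp
qed

end
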